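(* Let $G$ be a map graph with a corresponding planar bipartite graph $B$, let $\mathcal{D}=(T,\beta_{\mathcal{D}})$ be a nice tree decomposition of $B$, and let $\mathcal{D}'$ be derived from $\mathcal{D}$ as described in the context. Let $s\in S(G)$ and let $t$ be a node of $T$ labelled introduce$(s)$ in $\mathcal{D}$, with unique child $t'$. Then $\mathsf{Original}(t)=\mathsf{Original}(t')$ and $\mathsf{Fake}(t)=\mathsf{Fake}(t')$.
   Context: All graphs are finite and simple. For a bipartite graph $B$ with bipartition $V(B)=W\uplus U$, the half-square of $B$ is the graph on $W$ in which two vertices are adjacent iff they are at distance exactly $2$ in $B$. A graph $G$ is a map graph iff it is the half-square of some planar bipartite graph $B$; such $B$ (with $W=V(G)$) is a corresponding planar bipartite graph, and $S(G)=U$ is the set of special vertices. A tree decomposition $(T,\beta)$: rooted tree $T$, bags covering all vertices and edges, and for each vertex the nodes containing it induce a connected subtree. $\gamma_{\mathcal{D}}(t)$ is the union of bags of $t$ and its descendants. A nice tree decomposition has empty root bag and each node is a leaf (empty bag), introduce$(w)$ (one child $u$, $\beta(t)=\beta(u)\cup\{w\}$, $w\notin\beta(u)$), forget$(w)$ (one child $u$, $\beta(t)=\beta(u)\setminus\{w\}$, $w\in \beta(u)$), or join (two children with identical bags equal to $\beta(t)$). The derived decomposition $\mathcal{D}'=(T,\beta_{\mathcal{D}'})$ has $\beta_{\mathcal{D}'}(t)=(\beta_{\mathcal{D}}(t)\cap V(G))\cup\bigcup_{s\in\beta_{\mathcal{D}}(t)\cap S(G)}(N_B(s)\cap\gamma_{\mathcal{D}}(t))$.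 Define $\mathsf{Original}(t)=\beta_{\mathcal{D}}(t)\cap\beta_{\mathcal{D}'}(t)$ and $\mathsf{Fake}(t)=\beta_{\mathcal{D}'}(t)\setminus\beta_{\mathcal{D}}(t)$. *)

theory Defs
  imports "HOL-Analysis.Analysis"
begin

definition simple_graph :: "'v set \<Rightarrow> 'v set set \<Rightarrow> bool" where
  "simple_graph V E \<longleftrightarrow> finite V \<and>
     (\<forall>e\<in>E. \<exists>x y. x \<noteq> y \<and> x \<in> V \<and> y \<in> V \<and> e = {x, y})"

definition bipartite_graph :: "'v set \<Rightarrow> 'v set \<Rightarrow> 'v set set \<Rightarrow> bool" where
  "bipartite_graph W U E \<longleftrightarrow> simple_graph (W \<union> U) E \<and> W \<inter> U = {} \<and>
     (\<forall>e\<in>E. \<exists>w u. w \<in> W \<and> u \<in> U \<and> e = {w, u})"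

definition planar :: "'v set \<Rightarrow> 'v set set \<Rightarrow> bool" where
  "planar V E \<longleftrightarrow> (\<exists>(pos :: 'v \<Rightarrow> real^2) (c :: 'v set \<Rightarrow> real \<Rightarrow> real^2).
     inj_on pos V \<and>
     (\<forall>e\<in>E. arc (c e) \<and> {pathstart (c e), pathfinish (c e)} = pos ` e \<and>
              (\<forall>v\<in>V. pos v \<in> path_image (c e) \<longrightarrow> v \<in> e)) \<and>
     (\<forall>e\<in>E. \<forall>e'\<in>E. e \<noteq> e' \<longrightarrow>
              path_image (c e) \<inter> path_image (c e') \<subseteq> pos ` (e \<inter> e')))"

definition nbhd :: "'v set set \<Rightarrow> 'v \<Rightarrow> 'v set" where
  "nbhd E x = {y. {x, y} \<in> E}"

text \<open>Half-square of a bipartite graph B on W: two vertices of W adjacent iff at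
distance exactly 2 in B (distinct, nonadjacent, with a common neighbour).\<close>
definition half_square :: "'v set \<Rightarrow> 'v set set \<Rightarrow> 'v set set" where
  "half_square W E = {{x, y} | x y. x \<in> W \<and> y \<in> W \<and> x \<noteq> y \<and> {x, y} \<notin> E \<and>
                        (\<exists>u. {x, u} \<in> E \<and> {u, y} \<in> E)}"

text \<open>G = (VG, EG) is a map graph with corresponding planar bipartite graph
B = (W \<union> U, EB), W = V(G), U = S(G).\<close>
definition map_graph_of :: "'v set \<Rightarrow> 'v set set \<Rightarrow> 'v set \<Rightarrow> 'v set \<Rightarrow> 'v set set \<Rightarrow> bool" where
  "map_graph_of VG EG W U EB \<longleftrightarrow> bipartite_graph W U EB \<and> planar (W \<union> U) EB \<and>
     VG = W \<and> EG = half_square W EB"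

definition rooted_tree :: "'n set \<Rightarrow> 'n \<Rightarrow> ('n \<Rightarrow> 'n) \<Rightarrow> bool" where
  "rooted_tree Nd r par \<longleftrightarrow> finite Nd \<and> r \<in> Nd \<and> par r = r \<and>
     (\<forall>t\<in>Nd. par t \<in> Nd) \<and> (\<forall>t\<in>Nd. \<exists>k. (par ^^ k) t = r)"

definition children :: "'n set \<Rightarrow> 'n \<Rightarrow> ('n \<Rightarrow> 'n) \<Rightarrow> 'n \<Rightarrow> 'n set" where
  "children Nd r par t = {u \<in> Nd. u \<noteq> r \<and> par u = t}"

text \<open>u is a descendant of t (including t itself).\<close>
definition descendant :: "'n set \<Rightarrow> ('n \<Rightarrow> 'n) \<Rightarrow> 'n \<Rightarrow> 'n \<Rightarrow> bool" where
  "descendant Nd par t u \<longleftrightarrow> u \<in> Nd \<and> (\<exists>k. (par ^^ k) u = t)"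

definition tree_adj :: "'n \<Rightarrow> ('n \<Rightarrow> 'n) \<Rightarrow> 'n \<Rightarrow> 'n \<Rightarrow> bool" where
  "tree_adj r par a b \<longleftrightarrow> (a \<noteq> r \<and> par a = b) \<or> (b \<noteq> r \<and> par b = a)"

definition tree_connected :: "'n \<Rightarrow> ('n \<Rightarrow> 'n) \<Rightarrow> 'n set \<Rightarrow> bool" where
  "tree_connected r par X \<longleftrightarrow>
     (\<forall>a\<in>X. \<forall>b\<in>X. (a, b) \<in> {(x, y). x \<in> X \<and> y \<in> X \<and> tree_adj r par x y}\<^sup>*)"

definition tree_decomposition ::
  "'v set \<Rightarrow> 'v set set \<Rightarrow> 'n set \<Rightarrow> 'n \<Rightarrow> ('n \<Rightarrow> 'n) \<Rightarrow> ('n \<Rightarrow> 'v set) \<Rightarrow> bool" where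
  "tree_decomposition V E Nd r par \<beta> \<longleftrightarrow> rooted_tree Nd r par \<and>
     (\<forall>t\<in>Nd. \<beta> t \<subseteq> V) \<and>
     (\<forall>v\<in>V. \<exists>t\<in>Nd. v \<in> \<beta> t) \<and>
     (\<forall>e\<in>E. \<exists>t\<in>Nd. e \<subseteq> \<beta> t) \<and>
     (\<forall>v\<in>V. tree_connected r par {t \<in> Nd. v \<in> \<beta> t})"

definition is_leaf_node :: "'n set \<Rightarrow> 'n \<Rightarrow> ('n \<Rightarrow> 'n) \<Rightarrow> ('n \<Rightarrow> 'v set) \<Rightarrow> 'n \<Rightarrow> bool" where
  "is_leaf_node Nd r par \<beta> t \<longleftrightarrow> children Nd r par t = {} \<and> \<beta> t = {}"

definition is_introduce :: "'n set \<Rightarrow> 'n \<Rightarrow> ('n \<Rightarrow> 'n) \<Rightarrow> ('n \<Rightarrow> 'v set) \<Rightarrow> 'n \<Rightarrow> 'v \<Rightarrow> bool" where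
  "is_introduce Nd r par \<beta> t w \<longleftrightarrow>
     (\<exists>u. children Nd r par t = {u} \<and> \<beta> t = insert w (\<beta> u) \<and> w \<notin> \<beta> u)"

definition is_forget :: "'n set \<Rightarrow> 'n \<Rightarrow> ('n \<Rightarrow> 'n) \<Rightarrow> ('n \<Rightarrow> 'v set) \<Rightarrow> 'n \<Rightarrow> 'v \<Rightarrow> bool" where
  "is_forget Nd r par \<beta> t w \<longleftrightarrow>
     (\<exists>u. children Nd r par t = {u} \<and> \<beta> t = \<beta> u - {w} \<and> w \<in> \<beta> u)"

definition is_join :: "'n set \<Rightarrow> 'n \<Rightarrow> ('n \<Rightarrow> 'n) \<Rightarrow> ('n \<Rightarrow> 'v set) \<Rightarrow> 'n \<Rightarrow> bool" where
  "is_join Nd r par \<beta> t \<longleftrightarrow>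
     (\<exists>u1 u2. u1 \<noteq> u2 \<and> children Nd r par t = {u1, u2} \<and> \<beta> u1 = \<beta> t \<and> \<beta> u2 = \<beta> t)"

definition nice_tree_decomposition ::
  "'v set \<Rightarrow> 'v set set \<Rightarrow> 'n set \<Rightarrow> 'n \<Rightarrow> ('n \<Rightarrow> 'n) \<Rightarrow> ('n \<Rightarrow> 'v set) \<Rightarrow> bool" where
  "nice_tree_decomposition V E Nd r par \<beta> \<longleftrightarrow> tree_decomposition V E Nd r par \<beta> \<and>
     \<beta> r = {} \<and>
     (\<forall>t\<in>Nd. is_leaf_node Nd r par \<beta> t \<or> (\<exists>w. is_introduce Nd r par \<beta> t w) \<or>
              (\<exists>w. is_forget Nd r par \<beta> t w) \<or> is_join Nd r par \<beta> t)"

definition gamma :: "'n set \<Rightarrow> ('n \<Rightarrow> 'n) \<Rightarrow> ('n \<Rightarrow> 'v set) \<Rightarrow> 'n \<Rightarrow> 'v set" where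
  "gamma Nd par \<beta> t = \<Union>{\<beta> u | u. descendant Nd par t u}"

definition derived_bag ::
  "'v set \<Rightarrow> 'v set \<Rightarrow> 'v set set \<Rightarrow> 'n set \<Rightarrow> ('n \<Rightarrow> 'n) \<Rightarrow> ('n \<Rightarrow> 'v set) \<Rightarrow> 'n \<Rightarrow> 'v set" where
  "derived_bag VG SG EB Nd par \<beta> t =
     (\<beta> t \<inter> VG) \<union> \<Union>{nbhd EB s \<inter> gamma Nd par \<beta> t | s. s \<in> \<beta> t \<inter> SG}"

definition Original ::
  "'v set \<Rightarrow> 'v set \<Rightarrow> 'v set set \<Rightarrow> 'n set \<Rightarrow> ('n \<Rightarrow> 'n) \<Rightarrow> ('n \<Rightarrow> 'v set) \<Rightarrow> 'n \<Rightarrow> 'v set" where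
  "Original VG SG EB Nd par \<beta> t = \<beta> t \<inter> derived_bag VG SG EB Nd par \<beta> t"

definition Fake ::
  "'v set \<Rightarrow> 'v set \<Rightarrow> 'v set set \<Rightarrow> 'n set \<Rightarrow> ('n \<Rightarrow> 'n) \<Rightarrow> ('n \<Rightarrow> 'v set) \<Rightarrow> 'n \<Rightarrow> 'v set" where
  "Fake VG SG EB Nd par \<beta> t = derived_bag VG SG EB Nd par \<beta> t - \<beta> t"

end

theory Submission
  imports Defs
begin

text \<open>Introducing a special vertex s at t neither changes the vertices of G in the bag nor the
neighbourhoods of the other special vertices of the bag, since s is not adjacent to any special
vertex. The only new contribution to the derived bag is N(s) \<inter> \<gamma>(t'). But s occurs in
\<beta>(t) and not in \<beta>(t'), so by connectivity s does not occur below t' at all; hence every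
edge sw with w below t' is covered by a bag outside the subtree of t', and connectivity of the
occurrences of w forces w \<in> \<beta>(t'). So the derived bag does not change, and since it
consists of vertices of G only, neither do Original and Fake.\<close>

lemma funpow_in_rooted_tree:
  assumes "rooted_tree Nd r par" "u \<in> Nd"
  shows "(par ^^ k) u \<in> Nd"
  using assms by (induction k) (auto simp: rooted_tree_def)

lemma descendant_refl: "t \<in> Nd \<Longrightarrow> descendant Nd par t t"
  unfolding descendant_def by (metis funpow_0)

lemma parent_not_descendant:
  assumes "rooted_tree Nd r par" "t \<in> Nd" "t \<noteq> r"
  shows "\<not> descendant Nd par t (par t)"
proof
  assume "descendant Nd par t (par t)"
  then obtain k where "(par ^^ k) (par t) = t" by (auto simp: descendant_def)
  then have cycle: "(par ^^ Suc k) t = t" by (simp only: funpow_Suc_right o_apply)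
  obtain m where m: "(par ^^ m) t = r" using assms by (auto simp: rooted_tree_def)
  have root_fixed: "(par ^^ n) r = r" for n
    using assms(1) by (induction n) (auto simp: rooted_tree_def)
  have "t = (par ^^ (m * Suc k)) t"
    using funpow_mod_eq[OF cycle, of "m * Suc k"] by (metis funpow_0 mod_mult_self2_is_0)
  also have "\<dots> = (par ^^ (m * k)) ((par ^^ m) t)"
    by (simp only: mult_Suc_right add.commute[of m] funpow_add o_apply)
  also have "\<dots> = r" by (simp add: m root_fixed)
  finally show False using assms(3) by simp
qed

lemma descendant_of_single_child:
  assumes "rooted_tree Nd r par" "t \<in> Nd" "children Nd r par t = {t'}"
  shows "descendant Nd par t u \<longleftrightarrow> u = t \<or> descendant Nd par t' u"
proof
  assume "descendant Nd par t u"
  then have uN: "u \<in> Nd" and "\<exists>k. (par ^^ k) u = t" by (auto simp: descendant_def)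
  define k where "k = (LEAST k. (par ^^ k) u = t)"
  have k: "(par ^^ k) u = t"
    unfolding k_def using \<open>\<exists>k. (par ^^ k) u = t\<close> by (rule LeastI_ex)
  show "u = t \<or> descendant Nd par t' u"
  proof (cases k)
    case 0 then show ?thesis using k by simp
  next
    case (Suc m)
    define c where "c = (par ^^ m) u"
    have "par c = t" using k Suc by (simp add: c_def)
    have "c \<noteq> r"
    proof
      assume "c = r"
      then have "(par ^^ m) u = t" using \<open>par c = t\<close> assms(1) c_def by (auto simp: rooted_tree_def)
      then have "k \<le> m" unfolding k_def by (rule Least_le)
      then show False using Suc by simp
    qed
    then have "c \<in> children Nd r par t"
      using funpow_in_rooted_tree[OF assms(1) uN] \<open>par c = t\<close> by (simp add: children_def c_def)
    then show ?thesis using assms(3) uN c_def by (auto simp: descendant_def)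
  qed
next
  assume "u = t \<or> descendant Nd par t' u"
  then show "descendant Nd par t u"
  proof
    assume "u = t"
    then show ?thesis using assms(2) by (simp add: descendant_refl)
  next
    assume "descendant Nd par t' u"
    then obtain k where "u \<in> Nd" "(par ^^ k) u = t'" by (auto simp: descendant_def)
    moreover have "par t' = t" using assms(3) by (auto simp: children_def)
    ultimately have "(par ^^ Suc k) u = t" by simp
    then show ?thesis using \<open>u \<in> Nd\<close> unfolding descendant_def by blast
  qed
qed

lemma gamma_of_single_child:
  assumes "rooted_tree Nd r par" "t \<in> Nd" "children Nd r par t = {t'}"
  shows "gamma Nd par \<beta> t = \<beta> t \<union> gamma Nd par \<beta> t'"
proof -
  have "{\<beta> u |u. descendant Nd par t u} = insert (\<beta> t) {\<beta> u |u. descendant Nd par t' u}"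
    using descendant_of_single_child[OF assms] by auto
  then show ?thesis unfolding gamma_def by simp
qed

lemma bag_subset_gamma: "t \<in> Nd \<Longrightarrow> \<beta> t \<subseteq> gamma Nd par \<beta> t"
  unfolding gamma_def by (blast intro: descendant_refl)

text \<open>The only tree edge leaving the subtree of t' is the one from t' to its parent.\<close>
lemma tree_connected_enters_subtree:
  assumes "tree_connected r par X" "X \<subseteq> Nd" "a \<in> X" "b \<in> X"
    and "descendant Nd par t' a" "\<not> descendant Nd par t' b"
  shows "t' \<in> X"
proof -
  let ?R = "{(x, y). x \<in> X \<and> y \<in> X \<and> tree_adj r par x y}"
  have "(a, b) \<in> ?R\<^sup>*" using assms(1,3,4) by (simp add: tree_connected_def)
  then have "descendant Nd par t' b \<or> t' \<in> X"
  proof (induction rule: rtrancl_induct)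
    case base then show ?case using assms(5) by simp
  next
    case (step y z)
    have yz: "y \<in> X" "z \<in> X" "tree_adj r par y z" using step.hyps(2) by auto
    then have zN: "z \<in> Nd" using assms(2) by auto
    show ?case
    proof (cases "t' \<in> X")
      case False
      with step.IH obtain k where k: "(par ^^ k) y = t'" by (auto simp: descendant_def)
      from yz(3) show ?thesis unfolding tree_adj_def
      proof
        assume up: "y \<noteq> r \<and> par y = z"
        show ?thesis
        proof (cases k)
          case 0 then show ?thesis using k yz False by simp
        next
          case (Suc m)
          then have "(par ^^ m) z = t'" using k up by (metis funpow_Suc_right comp_apply)
          then show ?thesis using zN by (auto simp: descendant_def)
        qed
      next
        assume "z \<noteq> r \<and> par z = y"
        then have "(par ^^ Suc k) z = t'" using k by (simp only: funpow_Suc_right o_apply)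
        then show ?thesis using zN unfolding descendant_def by blast
      qed
    qed simp
  qed
  then show ?thesis using assms(6) by simp
qed

lemma tree_decomposition_subtree_separator:
  assumes "tree_decomposition V E Nd r par \<beta>"
    and "v \<in> gamma Nd par \<beta> t'" "x \<in> Nd" "v \<in> \<beta> x" "\<not> descendant Nd par t' x"
  shows "v \<in> \<beta> t'"
proof -
  obtain u where u: "descendant Nd par t' u" "v \<in> \<beta> u" using assms(2) unfolding gamma_def by blast
  have "v \<in> V" using assms(1,3,4) by (auto simp: tree_decomposition_def)
  then have "tree_connected r par {y \<in> Nd. v \<in> \<beta> y}"
    using assms(1) by (simp add: tree_decomposition_def)
  then have "t' \<in> {y \<in> Nd. v \<in> \<beta> y}"
    by (rule tree_connected_enters_subtree) (use u assms(3-5) in \<open>auto simp: descendant_def\<close>)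
  then show ?thesis by simp
qed

lemma bipartite_nbhd_subset:
  assumes "bipartite_graph W U E" "x \<in> U"
  shows "nbhd E x \<subseteq> W"
proof
  fix y assume "y \<in> nbhd E x"
  then have "{x, y} \<in> E" by (simp add: nbhd_def)
  then obtain w u where "w \<in> W" "u \<in> U" "{x, y} = {w, u}"
    using assms(1) by (auto simp: bipartite_graph_def)
  then show "y \<in> W" using assms disjoint_iff by (auto simp: bipartite_graph_def doubleton_eq_iff)
qed

lemma derived_bag_subset:
  assumes "bipartite_graph W U E"
  shows "derived_bag W U E Nd par \<beta> t \<subseteq> W"
  using bipartite_nbhd_subset[OF assms] unfolding derived_bag_def by blast

lemma derived_bag_introduce_special:
  assumes bip: "bipartite_graph W U E"
    and td: "tree_decomposition (W \<union> U) E Nd r par \<beta>"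
    and "s \<in> U" "t \<in> Nd" "children Nd r par t = {t'}"
    and bag_t: "\<beta> t = insert s (\<beta> t')" and "s \<notin> \<beta> t'"
  shows "derived_bag W U E Nd par \<beta> t = derived_bag W U E Nd par \<beta> t'"
proof -
  let ?g = "gamma Nd par \<beta>"
  have rt: "rooted_tree Nd r par" using td by (simp add: tree_decomposition_def)
  have t': "t' \<in> Nd" "t' \<noteq> r" "par t' = t" using assms(5) by (auto simp: children_def)
  have "s \<notin> W" using bip \<open>s \<in> U\<close> by (auto simp: bipartite_graph_def)
  have t_outside: "\<not> descendant Nd par t' t"
    using parent_not_descendant[OF rt t'(1,2)] t'(3) by simp
  have gamma_t: "?g t = insert s (?g t')"
    using gamma_of_single_child[OF rt assms(4,5), of \<beta>] bag_subset_gamma[OF t'(1), of \<beta> par] bag_t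
    by auto
  have s_not_below: "s \<notin> ?g t'"
    using tree_decomposition_subtree_separator[OF td _ assms(4) _ t_outside] bag_t \<open>s \<notin> \<beta> t'\<close>
    by auto
  have other_special: "nbhd E s' \<inter> ?g t = nbhd E s' \<inter> ?g t'" if "s' \<in> U" for s'
    using bipartite_nbhd_subset[OF bip that] \<open>s \<notin> W\<close> gamma_t by auto
  have new_nbrs: "nbhd E s \<inter> ?g t' \<subseteq> \<beta> t' \<inter> W"
  proof
    fix w assume w: "w \<in> nbhd E s \<inter> ?g t'"
    then have "{s, w} \<in> E" by (simp add: nbhd_def)
    then obtain x where x: "x \<in> Nd" "{s, w} \<subseteq> \<beta> x"
      using td by (auto simp: tree_decomposition_def)
    have "\<not> descendant Nd par t' x"
      using x s_not_below unfolding gamma_def by blast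
    then have "w \<in> \<beta> t'"
      using tree_decomposition_subtree_separator[OF td _ x(1)] w x(2) by blast
    then show "w \<in> \<beta> t' \<inter> W" using w bipartite_nbhd_subset[OF bip \<open>s \<in> U\<close>] by blast
  qed
  have "{nbhd E s' \<inter> ?g t | s'. s' \<in> \<beta> t \<inter> U} =
        insert (nbhd E s \<inter> ?g t') {nbhd E s' \<inter> ?g t' | s'. s' \<in> \<beta> t' \<inter> U}"
    using other_special \<open>s \<in> U\<close> bag_t by auto
  moreover have "\<beta> t \<inter> W = \<beta> t' \<inter> W" using bag_t \<open>s \<notin> W\<close> by simp
  ultimately show ?thesis using new_nbrs unfolding derived_bag_def by auto
qed

theorem lemma12:
  fixes VG W U :: "'v set" and EG EB :: "'v set set"
    and Nd :: "'n set" and r :: 'n and par :: "'n \<Rightarrow> 'n" and \<beta> :: "'n \<Rightarrow> 'v set"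
    and s :: 'v and t t' :: 'n
  assumes "map_graph_of VG EG W U EB"
    and "nice_tree_decomposition (W \<union> U) EB Nd r par \<beta>"
    and "s \<in> U"
    and "t \<in> Nd"
    and "is_introduce Nd r par \<beta> t s"
    and "children Nd r par t = {t'}"
  shows "Original VG U EB Nd par \<beta> t = Original VG U EB Nd par \<beta> t' \<and>
         Fake VG U EB Nd par \<beta> t = Fake VG U EB Nd par \<beta> t'"
proof -
  have VG: "VG = W" and bip: "bipartite_graph W U EB"
    using assms(1) by (auto simp: map_graph_of_def)
  have td: "tree_decomposition (W \<union> U) EB Nd r par \<beta>"
    using assms(2) by (simp add: nice_tree_decomposition_def)
  have bag_t: "\<beta> t = insert s (\<beta> t')" "s \<notin> \<beta> t'"
    using assms(5,6) by (auto simp: is_introduce_def)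
  have same: "derived_bag VG U EB Nd par \<beta> t = derived_bag VG U EB Nd par \<beta> t'"
    unfolding VG by (rule derived_bag_introduce_special[OF bip td assms(3,4,6) bag_t])
  have "s \<notin> derived_bag VG U EB Nd par \<beta> t'"
    using derived_bag_subset[OF bip, of Nd par \<beta> t'] assms(3) bip unfolding VG
    by (auto simp: bipartite_graph_def)
  then show ?thesis unfolding Original_def Fake_def same bag_t(1) by auto
qed

end
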